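(* Let $I$ be a composition of $n$. For every $1\le i\le n-1$ and every $D\subseteq\{1,\dots,n\}$, $$T_i\,c_D\epsilon_I=\alpha(i,I,D)\,c_D\epsilon_I+\sum_{D'<_I D}\beta_{D'}\,c_{D'}\epsilon_I$$ for some scalars $\beta_{D'}$. Here $\alpha(i,I,D)\in\{0,-1\}$, and $\alpha(i,I,D)=-1$ exactly when either ($i+1\in D$ and $i\notin\operatorname{Des}(I)$) or ($i\notin D$ and $i\in\operatorname{Des}(I)$).
   Context: For a composition $I=(i_1,\dots,i_r)$ of $n$, $\operatorname{Des}(I)=\{i_1,i_1+i_2,\dots,i_1+\cdots+i_{r-1}\}\subseteq[1,n-1]$. $H_n(0)$ is the complex algebra generated by $T_1,\dots,T_{n-1}$ with $T_i^2=-T_i$, $T_iT_j=T_jT_i$ ($|i-j|>1$), and $T_iT_{i+1}T_i=T_{i+1}T_iT_{i+1}$. $Cl_n$ is generated by $c_1,\dots,c_n$ with $c_ic_j=-c_jc_i$ ($i\ne j$) and $c_i^2=-1$; for $D=\{d_1<\dots<d_k\}$, $c_D=c_{d_1}\cdots c_{d_k}$. $HCl_n(0)$ is the complex algebra generated by the $T_i$ and the $c_j$, with these relations together with $T_ic_j=c_jT_i$ ($j\ne i,i+1$), $T_ic_i=c_{i+1}T_i$, and $(T_i+1)c_{i+1}=c_i(T_i+1)$. $S_I=\mathbb{C}\epsilon_I$ is the one-dimensional $H_n(0)$-module with $T_j\epsilon_I=-\epsilon_I$ if $j\in\operatorname{Des}(I)$ and $T_j\epsilon_I=0$ otherwise.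 $M_I=HCl_n(0)\otimes_{H_n(0)}S_I$, which has basis $(c_D\epsilon_I)_{D\subseteq\{1,\dots,n\}}$. The partial order $\le_I$ on subsets of $\{1,\dots,n\}$ is the reflexive–transitive closure of the relations $D'\lessdot D$, which hold when, for some $1\le i\le n-1$, one of the following is true: (a) $i\notin\operatorname{Des}(I)$, $i\notin D$, $i+1\in D$, and $D'=(D\setminus\{i+1\})\cup\{i\}$; (b) $i\notin\operatorname{Des}(I)$, $i,i+1\in D$, and $D'=D\setminus\{i,i+1\}$; (c) $i\in\operatorname{Des}(I)$, $i\in D$, $i+1\notin D$, and $D'=(D\setminus\{i\})\cup\{i+1\}$; (d) $i\in\operatorname{Des}(I)$, $i,i+1\in D$, and $D'=D\setminus\{i,i+1\}$. We write $D'<_ID$ for $D'\le_ID$ with $D'\ne D$. *)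

theory Defs
  imports Complex_Main
begin

text \<open>Generators of the free algebra: T i (0-Hecke generators) and C j (Clifford generators).\<close>
datatype gen = T nat | C nat

type_synonym word = "gen list"
text \<open>Elements of the free associative algebra over the complex numbers: coefficient functions on words.\<close>
type_synonym elem = "word \<Rightarrow> complex"

definition wd :: "word \<Rightarrow> elem" where
  "wd w = (\<lambda>v. if v = w then 1 else 0)"

definition padd :: "elem \<Rightarrow> elem \<Rightarrow> elem" where
  "padd f g = (\<lambda>w. f w + g w)"

definition psub :: "elem \<Rightarrow> elem \<Rightarrow> elem" where
  "psub f g = (\<lambda>w. f w - g w)"

definition psmult :: "complex \<Rightarrow> elem \<Rightarrow> elem" where
  "psmult a f = (\<lambda>w. a * f w)"

definition lmul :: "gen \<Rightarrow> elem \<Rightarrow> elem" where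
  "lmul g f = (\<lambda>x. case x of [] \<Rightarrow> 0 | h # y \<Rightarrow> (if h = g then f y else 0))"

definition rmul :: "elem \<Rightarrow> gen \<Rightarrow> elem" where
  "rmul f g = (\<lambda>x. if x \<noteq> [] \<and> last x = g then f (butlast x) else 0)"

definition valid_gen :: "nat \<Rightarrow> gen \<Rightarrow> bool" where
  "valid_gen n g = (case g of T i \<Rightarrow> 1 \<le> i \<and> i < n | C j \<Rightarrow> 1 \<le> j \<and> j \<le> n)"

definition is_composition :: "nat list \<Rightarrow> nat \<Rightarrow> bool" where
  "is_composition I n \<longleftrightarrow> (\<forall>p\<in>set I. 0 < p) \<and> sum_list I = n"

definition des :: "nat list \<Rightarrow> nat set" where
  "des I = {sum_list (take k I) | k. 1 \<le> k \<and> k < length I}"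

text \<open>Defining relators of HCl_n(0) (each relation written as "lhs - rhs").\<close>
definition hcl_relators :: "nat \<Rightarrow> elem set" where
  "hcl_relators n =
     {padd (wd [T i, T i]) (wd [T i]) | i. 1 \<le> i \<and> i < n}
   \<union> {psub (wd [T i, T j]) (wd [T j, T i]) | i j.
        1 \<le> i \<and> i < n \<and> 1 \<le> j \<and> j < n \<and> (i + 1 < j \<or> j + 1 < i)}
   \<union> {psub (wd [T i, T (i+1), T i]) (wd [T (i+1), T i, T (i+1)]) | i. 1 \<le> i \<and> i + 1 < n}
   \<union> {padd (wd [C i, C j]) (wd [C j, C i]) | i j.
        1 \<le> i \<and> i \<le> n \<and> 1 \<le> j \<and> j \<le> n \<and> i \<noteq> j}
   \<union> {padd (wd [C i, C i]) (wd []) | i. 1 \<le> i \<and> i \<le> n}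
   \<union> {psub (wd [T i, C j]) (wd [C j, T i]) | i j.
        1 \<le> i \<and> i < n \<and> 1 \<le> j \<and> j \<le> n \<and> j \<noteq> i \<and> j \<noteq> i + 1}
   \<union> {psub (wd [T i, C i]) (wd [C (i+1), T i]) | i. 1 \<le> i \<and> i < n}
   \<union> {psub (padd (wd [T i, C (i+1)]) (wd [C (i+1)])) (padd (wd [C i, T i]) (wd [C i])) | i.
        1 \<le> i \<and> i < n}"

text \<open>Two-sided ideal of the free algebra generated by the relators: HCl_n(0) = F / hcl_ideal n.\<close>
inductive_set hcl_ideal :: "nat \<Rightarrow> elem set" for n where
  rel: "r \<in> hcl_relators n \<Longrightarrow> r \<in> hcl_ideal n"
| zero: "(\<lambda>_. 0) \<in> hcl_ideal n"
| add: "f \<in> hcl_ideal n \<Longrightarrow> g \<in> hcl_ideal n \<Longrightarrow> padd f g \<in> hcl_ideal n"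
| smult: "f \<in> hcl_ideal n \<Longrightarrow> psmult a f \<in> hcl_ideal n"
| lmul: "valid_gen n g \<Longrightarrow> f \<in> hcl_ideal n \<Longrightarrow> lmul g f \<in> hcl_ideal n"
| rmul: "valid_gen n g \<Longrightarrow> f \<in> hcl_ideal n \<Longrightarrow> rmul f g \<in> hcl_ideal n"

text \<open>Annihilating relations of epsilon_I in S_I: T_j + 1 (j in Des I), T_j (j not in Des I).\<close>
definition S_relators :: "nat \<Rightarrow> nat list \<Rightarrow> elem set" where
  "S_relators n I = {(if j \<in> des I then padd (wd [T j]) (wd []) else wd [T j]) | j. 1 \<le> j \<and> j < n}"

text \<open>M_I = HCl_n(0) \<otimes>_{H_n(0)} S_I = F / (hcl_ideal n + F * S_relators n I);
  M_kernel n I is the kernel of the quotient map F \<rightarrow> M_I, f \<mapsto> f \<cdot> epsilon_I.\<close>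
inductive_set M_kernel :: "nat \<Rightarrow> nat list \<Rightarrow> elem set" for n I where
  ideal: "f \<in> hcl_ideal n \<Longrightarrow> f \<in> M_kernel n I"
| srel: "k \<in> S_relators n I \<Longrightarrow> k \<in> M_kernel n I"
| add: "f \<in> M_kernel n I \<Longrightarrow> g \<in> M_kernel n I \<Longrightarrow> padd f g \<in> M_kernel n I"
| smult: "f \<in> M_kernel n I \<Longrightarrow> psmult a f \<in> M_kernel n I"
| lmul: "valid_gen n g \<Longrightarrow> f \<in> M_kernel n I \<Longrightarrow> lmul g f \<in> M_kernel n I"

text \<open>Equality of f \<cdot> epsilon_I and g \<cdot> epsilon_I in M_I.\<close>
definition M_eq :: "nat \<Rightarrow> nat list \<Rightarrow> elem \<Rightarrow> elem \<Rightarrow> bool" where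
  "M_eq n I f g \<longleftrightarrow> psub f g \<in> M_kernel n I"

definition cword :: "nat set \<Rightarrow> word" where
  "cword D = map C (sorted_list_of_set D)"

definition cov :: "nat \<Rightarrow> nat list \<Rightarrow> nat set \<Rightarrow> nat set \<Rightarrow> bool" where
  "cov n I D' D \<longleftrightarrow> (\<exists>i. 1 \<le> i \<and> i \<le> n - 1 \<and>
     ((i \<notin> des I \<and> i \<notin> D \<and> i + 1 \<in> D \<and> D' = insert i (D - {i + 1}))
    \<or> (i \<notin> des I \<and> i \<in> D \<and> i + 1 \<in> D \<and> D' = D - {i, i + 1})
    \<or> (i \<in> des I \<and> i \<in> D \<and> i + 1 \<notin> D \<and> D' = insert (i + 1) (D - {i}))
    \<or> (i \<in> des I \<and> i \<in> D \<and> i + 1 \<in> D \<and> D' = D - {i, i + 1})))"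

definition le_I :: "nat \<Rightarrow> nat list \<Rightarrow> nat set \<Rightarrow> nat set \<Rightarrow> bool" where
  "le_I n I = (cov n I)\<^sup>*\<^sup>*"

definition lt_I :: "nat \<Rightarrow> nat list \<Rightarrow> nat set \<Rightarrow> nat set \<Rightarrow> bool" where
  "lt_I n I D' D \<longleftrightarrow> le_I n I D' D \<and> D' \<noteq> D"

definition alpha :: "nat \<Rightarrow> nat list \<Rightarrow> nat set \<Rightarrow> complex" where
  "alpha i I D = (if (i + 1 \<in> D \<and> i \<notin> des I) \<or> (i \<notin> D \<and> i \<in> des I) then -1 else 0)"

end

theory Submission
  imports Defs
begin

(*
  Write c_D = c_P X c_Q, where P and Q are the elements of D below i and above i + 1, and X is the
  part of c_D among c_i, c_(i+1). The generator T_i commutes with every c_j, j distinct from i and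
  i + 1, and acts on epsilon_I by a scalar (-1 or 0 according to whether i is a descent of I).
  Hence T_i c_D epsilon_I = c_P (T_i X c_Q epsilon_I), and the mixed relations T_i c_i = c_(i+1) T_i,
  T_i c_(i+1) = c_i T_i + c_i - c_(i+1) together with the Clifford relations evaluate T_i X c_Q
  epsilon_I in each of the four cases for X. Besides c_D epsilon_I at most one further basis vector
  c_D' epsilon_I occurs, and whenever its coefficient is nonzero D' is covered by D.
*)

lemma valid_gen_simps [simp]:
  "valid_gen n (T j) \<longleftrightarrow> 1 \<le> j \<and> j < n"
  "valid_gen n (C j) \<longleftrightarrow> 1 \<le> j \<and> j \<le> n"
  by (simp_all add: valid_gen_def)

lemma list_all_valid_gen_map_C [simp]:
  "list_all (valid_gen n) (map C p) \<longleftrightarrow> set p \<subseteq> {1..n}"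
  by (auto simp: list_all_iff)

lemma lmul_wd: "lmul g (wd w) = wd (g # w)"
  by (rule ext) (simp add: lmul_def wd_def split: list.split)

lemma rmul_wd: "rmul (wd w) g = wd (w @ [g])"
proof (rule ext)
  fix x show "rmul (wd w) g x = wd (w @ [g]) x"
    by (cases x rule: rev_cases) (auto simp: rmul_def wd_def)
qed

lemma lmul_padd: "lmul g (padd f h) = padd (lmul g f) (lmul g h)"
  by (rule ext) (simp add: lmul_def padd_def split: list.split)

lemma lmul_psub: "lmul g (psub f h) = psub (lmul g f) (lmul g h)"
  by (rule ext) (simp add: lmul_def psub_def split: list.split)

lemma lmul_psmult: "lmul g (psmult a f) = psmult a (lmul g f)"
  by (rule ext) (simp add: lmul_def psmult_def split: list.split)

lemma rmul_padd: "rmul (padd f h) g = padd (rmul f g) (rmul h g)"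
  by (rule ext) (simp add: rmul_def padd_def)

lemma rmul_psub: "rmul (psub f h) g = psub (rmul f g) (rmul h g)"
  by (rule ext) (simp add: rmul_def psub_def)

fun lmul_word :: "word \<Rightarrow> elem \<Rightarrow> elem" where
  "lmul_word [] f = f"
| "lmul_word (g # u) f = lmul g (lmul_word u f)"

fun rmul_word :: "elem \<Rightarrow> word \<Rightarrow> elem" where
  "rmul_word f [] = f"
| "rmul_word f (g # v) = rmul_word (rmul f g) v"

lemma lmul_word_wd [simp]: "lmul_word u (wd w) = wd (u @ w)"
  by (induction u) (simp_all add: lmul_wd)

lemma rmul_word_wd [simp]: "rmul_word (wd w) v = wd (w @ v)"
  by (induction v arbitrary: w) (simp_all add: rmul_wd)

lemma lmul_word_padd [simp]: "lmul_word u (padd f h) = padd (lmul_word u f) (lmul_word u h)"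
  by (induction u) (simp_all add: lmul_padd)

lemma lmul_word_psub [simp]: "lmul_word u (psub f h) = psub (lmul_word u f) (lmul_word u h)"
  by (induction u) (simp_all add: lmul_psub)

lemma lmul_word_psmult [simp]: "lmul_word u (psmult a f) = psmult a (lmul_word u f)"
  by (induction u) (simp_all add: lmul_psmult)

lemma rmul_word_padd [simp]: "rmul_word (padd f h) v = padd (rmul_word f v) (rmul_word h v)"
  by (induction v arbitrary: f h) (simp_all add: rmul_padd)

lemma rmul_word_psub [simp]: "rmul_word (psub f h) v = psub (rmul_word f v) (rmul_word h v)"
  by (induction v arbitrary: f h) (simp_all add: rmul_psub)

lemma rmul_word_hcl_ideal:
  "list_all (valid_gen n) v \<Longrightarrow> f \<in> hcl_ideal n \<Longrightarrow> rmul_word f v \<in> hcl_ideal n"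
  by (induction v arbitrary: f) (simp_all add: hcl_ideal.rmul)

lemma lmul_word_M_kernel:
  "list_all (valid_gen n) u \<Longrightarrow> f \<in> M_kernel n I \<Longrightarrow> lmul_word u f \<in> M_kernel n I"
  by (induction u) (simp_all add: M_kernel.lmul)

lemma M_eq_refl: "M_eq n I f f"
proof -
  have "psub f f = (\<lambda>_. 0)" by (simp add: psub_def)
  then show ?thesis by (simp add: M_eq_def M_kernel.ideal hcl_ideal.zero)
qed

lemma M_eq_trans [trans]: "M_eq n I f g \<Longrightarrow> M_eq n I g h \<Longrightarrow> M_eq n I f h"
proof -
  have "psub f h = padd (psub f g) (psub g h)" by (rule ext) (simp add: psub_def padd_def)
  then show "M_eq n I f g \<Longrightarrow> M_eq n I g h \<Longrightarrow> M_eq n I f h"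
    by (simp add: M_eq_def M_kernel.add)
qed

lemma M_eq_padd: "M_eq n I f f' \<Longrightarrow> M_eq n I g g' \<Longrightarrow> M_eq n I (padd f g) (padd f' g')"
proof -
  have "psub (padd f g) (padd f' g') = padd (psub f f') (psub g g')"
    by (rule ext) (simp add: psub_def padd_def)
  then show "M_eq n I f f' \<Longrightarrow> M_eq n I g g' \<Longrightarrow> M_eq n I (padd f g) (padd f' g')"
    by (simp add: M_eq_def M_kernel.add)
qed

lemma M_eq_psmult: "M_eq n I f g \<Longrightarrow> M_eq n I (psmult a f) (psmult a g)"
proof -
  have "psub (psmult a f) (psmult a g) = psmult a (psub f g)"
    by (rule ext) (simp add: psub_def psmult_def algebra_simps)
  then show "M_eq n I f g \<Longrightarrow> M_eq n I (psmult a f) (psmult a g)"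
    by (simp add: M_eq_def M_kernel.smult)
qed

lemma M_eq_psub: "M_eq n I f f' \<Longrightarrow> M_eq n I g g' \<Longrightarrow> M_eq n I (psub f g) (psub f' g')"
proof -
  have "psub f g = padd f (psmult (-1) g)" for f g
    by (rule ext) (simp add: psub_def padd_def psmult_def)
  then show "M_eq n I f f' \<Longrightarrow> M_eq n I g g' \<Longrightarrow> M_eq n I (psub f g) (psub f' g')"
    by (simp add: M_eq_padd M_eq_psmult)
qed

lemma M_eq_lmul_word:
  "list_all (valid_gen n) u \<Longrightarrow> M_eq n I f g \<Longrightarrow> M_eq n I (lmul_word u f) (lmul_word u g)"
  unfolding M_eq_def by (metis lmul_word_M_kernel lmul_word_psub)


lemma M_eq_relator_psub:
  assumes "psub f g \<in> hcl_relators n" "list_all (valid_gen n) v"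
  shows "M_eq n I (rmul_word f v) (rmul_word g v)"
  using rmul_word_hcl_ideal[OF assms(2) hcl_ideal.rel[OF assms(1)]]
  by (simp add: M_eq_def M_kernel.ideal)

lemma M_eq_relator_padd:
  assumes "padd f g \<in> hcl_relators n" "list_all (valid_gen n) v"
  shows "M_eq n I (rmul_word f v) (psmult (-1) (rmul_word g v))"
proof -
  have "psub x (psmult (-1) y) = padd x y" for x y :: elem
    by (rule ext) (simp add: psub_def padd_def psmult_def)
  then show ?thesis
    using rmul_word_hcl_ideal[OF assms(2) hcl_ideal.rel[OF assms(1)]]
    by (simp add: M_eq_def M_kernel.ideal)
qed

context
  fixes n :: nat and I :: "nat list" and v :: word
  assumes v: "list_all (valid_gen n) v"
begin

lemma M_eq_T_C_comm:
  assumes "1 \<le> i" "i < n" "1 \<le> j" "j \<le> n" "j \<noteq> i" "j \<noteq> Suc i"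
  shows "M_eq n I (wd (T i # C j # v)) (wd (C j # T i # v))"
proof -
  have "psub (wd [T i, C j]) (wd [C j, T i]) \<in> hcl_relators n"
    using assms unfolding hcl_relators_def by auto
  from M_eq_relator_psub[OF this v] show ?thesis by simp
qed

lemma M_eq_T_C:
  assumes "1 \<le> i" "i < n"
  shows "M_eq n I (wd (T i # C i # v)) (wd (C (Suc i) # T i # v))"
proof -
  have "psub (wd [T i, C i]) (wd [C (Suc i), T i]) \<in> hcl_relators n"
    using assms unfolding hcl_relators_def by auto
  from M_eq_relator_psub[OF this v] show ?thesis by simp
qed

lemma M_eq_T_C_Suc:
  assumes "1 \<le> i" "i < n"
  shows "M_eq n I (wd (T i # C (Suc i) # v))
           (psub (padd (wd (C i # T i # v)) (wd (C i # v))) (wd (C (Suc i) # v)))"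
proof -
  have "psub (padd (wd [T i, C (Suc i)]) (wd [C (Suc i)])) (padd (wd [C i, T i]) (wd [C i]))
          \<in> hcl_relators n"
    using assms unfolding hcl_relators_def by auto
  from M_eq_relator_psub[OF this v]
  have "M_eq n I (padd (wd (T i # C (Suc i) # v)) (wd (C (Suc i) # v)))
                 (padd (wd (C i # T i # v)) (wd (C i # v)))"
    by simp
  then have "M_eq n I (psub (padd (wd (T i # C (Suc i) # v)) (wd (C (Suc i) # v))) (wd (C (Suc i) # v)))
                 (psub (padd (wd (C i # T i # v)) (wd (C i # v))) (wd (C (Suc i) # v)))"
    by (rule M_eq_psub) (rule M_eq_refl)
  moreover have "psub (padd f g) g = f" for f g :: elem
    by (rule ext) (simp add: psub_def padd_def)
  ultimately show ?thesis by simp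
qed

lemma M_eq_C_anticomm:
  assumes "1 \<le> j" "j \<le> n" "1 \<le> k" "k \<le> n" "j \<noteq> k"
  shows "M_eq n I (wd (C j # C k # v)) (psmult (-1) (wd (C k # C j # v)))"
proof -
  have "padd (wd [C j, C k]) (wd [C k, C j]) \<in> hcl_relators n"
    using assms unfolding hcl_relators_def by auto
  from M_eq_relator_padd[OF this v] show ?thesis by simp
qed

lemma M_eq_C_square:
  assumes "1 \<le> j" "j \<le> n"
  shows "M_eq n I (wd (C j # C j # v)) (psmult (-1) (wd v))"
proof -
  have "padd (wd [C j, C j]) (wd []) \<in> hcl_relators n"
    using assms unfolding hcl_relators_def by auto
  from M_eq_relator_padd[OF this v] show ?thesis by simp
qed

end

definition S_char :: "nat list \<Rightarrow> nat \<Rightarrow> complex" where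
  "S_char I j = (if j \<in> des I then -1 else 0)"

(* M_I is only a left module, so the relations of S_I apply at the right end of a word only,
   whereas the relators of HCl_n(0) hold in every right context. *)
lemma M_eq_T_eps:
  assumes "1 \<le> j" "j < n"
  shows "M_eq n I (wd [T j]) (psmult (S_char I j) (wd []))"
proof -
  have "psub (wd [T j]) (psmult (S_char I j) (wd []))
          = (if j \<in> des I then padd (wd [T j]) (wd []) else wd [T j])"
    by (rule ext) (simp add: S_char_def psub_def padd_def psmult_def)
  also have "\<dots> \<in> S_relators n I"
    using assms unfolding S_relators_def by auto
  finally show ?thesis by (simp add: M_eq_def M_kernel.srel)
qed

context
  fixes n i :: nat and I :: "nat list"
  assumes i: "1 \<le> i" "i < n"
begin

lemma M_eq_T_commute_Cs:
  assumes "set p \<subseteq> {1..n} - {i, Suc i}" "list_all (valid_gen n) w"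
  shows "M_eq n I (wd (T i # map C p @ w)) (wd (map C p @ T i # w))"
  using assms(1)
proof (induction p)
  case Nil
  show ?case by (simp add: M_eq_refl)
next
  case (Cons j p)
  have "M_eq n I (wd (T i # C j # map C p @ w)) (wd (C j # T i # map C p @ w))"
    using Cons.prems assms(2) i by (intro M_eq_T_C_comm) auto
  also have "M_eq n I \<dots> (lmul_word [C j] (wd (map C p @ T i # w)))"
    using M_eq_lmul_word[OF _ Cons.IH, of "[C j]"] Cons.prems by simp
  finally show ?case by simp
qed

context
  fixes q :: "nat list"
  assumes q: "set q \<subseteq> {1..n} - {i, Suc i}"
begin

lemma M_eq_T_Cs: "M_eq n I (wd (T i # map C q)) (psmult (S_char I i) (wd (map C q)))"
proof -
  have "M_eq n I (wd (T i # map C q)) (lmul_word (map C q) (wd [T i]))"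
    using M_eq_T_commute_Cs[OF q, of "[]"] by simp
  also have "M_eq n I \<dots> (lmul_word (map C q) (psmult (S_char I i) (wd [])))"
    using q by (intro M_eq_lmul_word M_eq_T_eps i) auto
  finally show ?thesis by simp
qed

lemma M_eq_T_C_Cs:
  "M_eq n I (wd (T i # C i # map C q)) (psmult (S_char I i) (wd (C (Suc i) # map C q)))"
proof -
  have "M_eq n I (wd (T i # C i # map C q)) (lmul_word [C (Suc i)] (wd (T i # map C q)))"
    using M_eq_T_C[of n "map C q" i I] i q by auto
  also have "M_eq n I \<dots> (lmul_word [C (Suc i)] (psmult (S_char I i) (wd (map C q))))"
    by (intro M_eq_lmul_word M_eq_T_Cs) (use i in simp)
  finally show ?thesis by simp
qed

lemma M_eq_T_C_Suc_Cs:
  "M_eq n I (wd (T i # C (Suc i) # map C q))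
     (psub (psmult (S_char I i + 1) (wd (C i # map C q))) (wd (C (Suc i) # map C q)))"
proof -
  have "M_eq n I (wd (T i # C (Suc i) # map C q))
     (psub (padd (lmul_word [C i] (wd (T i # map C q))) (wd (C i # map C q))) (wd (C (Suc i) # map C q)))"
    using M_eq_T_C_Suc[of n "map C q" i I] i q by auto
  also have "M_eq n I \<dots>
     (psub (padd (lmul_word [C i] (psmult (S_char I i) (wd (map C q)))) (wd (C i # map C q)))
        (wd (C (Suc i) # map C q)))"
    by (intro M_eq_psub M_eq_padd M_eq_lmul_word M_eq_T_Cs M_eq_refl) (use i in simp)
  also have "\<dots> = psub (psmult (S_char I i + 1) (wd (C i # map C q))) (wd (C (Suc i) # map C q))"
    unfolding lmul_word.simps lmul_psmult lmul_wd
    by (rule ext) (simp add: psub_def padd_def psmult_def algebra_simps)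
  finally show ?thesis .
qed

lemma M_eq_T_C_C_Suc_Cs:
  "M_eq n I (wd (T i # C i # C (Suc i) # map C q))
     (padd (psmult (- (S_char I i + 1)) (wd (C i # C (Suc i) # map C q))) (wd (map C q)))"
proof -
  have "M_eq n I (wd (T i # C i # C (Suc i) # map C q))
          (lmul_word [C (Suc i)] (wd (T i # C (Suc i) # map C q)))"
    using M_eq_T_C[of n "C (Suc i) # map C q" i I] i q by auto
  also have "M_eq n I \<dots> (lmul_word [C (Suc i)]
     (psub (psmult (S_char I i + 1) (wd (C i # map C q))) (wd (C (Suc i) # map C q))))"
    by (intro M_eq_lmul_word M_eq_T_C_Suc_Cs) (use i in simp)
  also have "\<dots> = psub (psmult (S_char I i + 1) (wd (C (Suc i) # C i # map C q)))
                       (wd (C (Suc i) # C (Suc i) # map C q))"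
    by simp
  also have "M_eq n I \<dots> (psub (psmult (S_char I i + 1) (psmult (-1) (wd (C i # C (Suc i) # map C q))))
                            (psmult (-1) (wd (map C q))))"
    using i q
    by (intro M_eq_psub M_eq_psmult M_eq_C_anticomm M_eq_C_square) auto
  also have "\<dots> = padd (psmult (- (S_char I i + 1)) (wd (C i # C (Suc i) # map C q))) (wd (map C q))"
    by (rule ext) (simp add: psub_def padd_def psmult_def algebra_simps)
  finally show ?thesis .
qed

end

end

lemma cword_split:
  assumes "finite D"
  shows "cword D = cword {x\<in>D. x < i} @ map C (filter (\<lambda>x. x \<in> D) [i, Suc i])
                     @ cword {x\<in>D. Suc i < x}"
proof -
  let ?xs = "sorted_list_of_set {x\<in>D. x < i} @ filter (\<lambda>x. x \<in> D) [i, Suc i]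
               @ sorted_list_of_set {x\<in>D. Suc i < x}"
  have "set ?xs = D"
    using assms by (auto simp: not_less_eq Suc_le_eq) (metis less_SucE linorder_neqE_nat)+
  moreover have "sorted ?xs" "distinct ?xs" using assms by (auto simp: sorted_append)
  ultimately have "sorted_list_of_set D = ?xs"
    by (metis sorted_list_of_set.idem_if_sorted_distinct)
  then show ?thesis by (simp add: cword_def)
qed

context
  fixes n i :: nat and I :: "nat list" and D :: "nat set"
  assumes i: "1 \<le> i" "i < n" and D: "D \<subseteq> {1..n}"
begin

lemma M_eq_T_cword_middle:
  assumes "M_eq n I (wd (T i # map C (filter (\<lambda>x. x \<in> D) [i, Suc i]) @ cword {x\<in>D. Suc i < x}))
             R"
  shows "M_eq n I (wd (T i # cword D)) (lmul_word (cword {x\<in>D. x < i}) R)"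
proof -
  have fin: "finite D" using D finite_subset by blast
  let ?P = "sorted_list_of_set {x\<in>D. x < i}"
  let ?w = "map C (filter (\<lambda>x. x \<in> D) [i, Suc i]) @ cword {x\<in>D. Suc i < x}"
  have "cword D = map C ?P @ ?w"
    using cword_split[OF fin, of i] by (simp add: cword_def)
  then have "M_eq n I (wd (T i # cword D)) (wd (map C ?P @ T i # ?w))"
    using D fin by (simp only:) (intro M_eq_T_commute_Cs i; auto simp: cword_def)
  also have "\<dots> = lmul_word (map C ?P) (wd (T i # ?w))"
    by simp
  also have "M_eq n I \<dots> (lmul_word (map C ?P) R)"
    by (rule M_eq_lmul_word[OF _ assms]) (use D fin in auto)
  finally show ?thesis by (simp add: cword_def)
qed

lemma sorted_above_Suc_subset:
  "set (sorted_list_of_set {x\<in>D. Suc i < x}) \<subseteq> {1..n} - {i, Suc i}"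
  using D finite_subset[OF D] by auto

lemma cword_change_middle:
  assumes "\<And>x. x \<noteq> i \<Longrightarrow> x \<noteq> Suc i \<Longrightarrow> x \<in> E \<longleftrightarrow> x \<in> D"
  shows "cword E = cword {x\<in>D. x < i} @ map C (filter (\<lambda>x. x \<in> E) [i, Suc i])
                     @ cword {x\<in>D. Suc i < x}"
proof -
  have "E \<subseteq> D \<union> {i, Suc i}" using assms by blast
  then have "finite E"
    using D by (meson finite_subset finite_Un finite_atLeastAtMost finite.emptyI finite.insertI)
  moreover have "{x\<in>E. x < i} = {x\<in>D. x < i}" "{x\<in>E. Suc i < x} = {x\<in>D. Suc i < x}"
    using assms by auto
  ultimately show ?thesis by (metis cword_split)
qed

lemma M_eq_T_cword_notin_notin:
  assumes "i \<notin> D" "Suc i \<notin> D"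
  shows "M_eq n I (wd (T i # cword D)) (psmult (S_char I i) (wd (cword D)))"
proof -
  have "M_eq n I (wd (T i # cword D))
          (lmul_word (cword {x\<in>D. x < i}) (psmult (S_char I i) (wd (cword {x\<in>D. Suc i < x}))))"
    using assms M_eq_T_Cs[OF i sorted_above_Suc_subset, of I]
    by (intro M_eq_T_cword_middle) (simp add: cword_def)
  then show ?thesis using cword_change_middle[of D] assms by simp
qed

lemma M_eq_T_cword_in_notin:
  assumes "i \<in> D" "Suc i \<notin> D"
  shows "M_eq n I (wd (T i # cword D))
           (psmult (S_char I i) (wd (cword (insert (Suc i) (D - {i})))))"
proof -
  have "M_eq n I (wd (T i # cword D)) (lmul_word (cword {x\<in>D. x < i})
          (psmult (S_char I i) (wd (C (Suc i) # cword {x\<in>D. Suc i < x}))))"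
    using assms M_eq_T_C_Cs[OF i sorted_above_Suc_subset, of I]
    by (intro M_eq_T_cword_middle) (simp add: cword_def)
  then show ?thesis using cword_change_middle[of "insert (Suc i) (D - {i})"] assms by simp
qed

lemma M_eq_T_cword_notin_in:
  assumes "i \<notin> D" "Suc i \<in> D"
  shows "M_eq n I (wd (T i # cword D))
           (psub (psmult (S_char I i + 1) (wd (cword (insert i (D - {Suc i}))))) (wd (cword D)))"
proof -
  have "M_eq n I (wd (T i # cword D)) (lmul_word (cword {x\<in>D. x < i})
          (psub (psmult (S_char I i + 1) (wd (C i # cword {x\<in>D. Suc i < x})))
                (wd (C (Suc i) # cword {x\<in>D. Suc i < x}))))"
    using assms M_eq_T_C_Suc_Cs[OF i sorted_above_Suc_subset, of I]
    by (intro M_eq_T_cword_middle) (simp add: cword_def)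
  then show ?thesis
    using cword_change_middle[of D] cword_change_middle[of "insert i (D - {Suc i})"] assms by simp
qed

lemma M_eq_T_cword_in_in:
  assumes "i \<in> D" "Suc i \<in> D"
  shows "M_eq n I (wd (T i # cword D))
           (padd (psmult (- (S_char I i + 1)) (wd (cword D))) (wd (cword (D - {i, Suc i}))))"
proof -
  have "M_eq n I (wd (T i # cword D)) (lmul_word (cword {x\<in>D. x < i})
          (padd (psmult (- (S_char I i + 1)) (wd (C i # C (Suc i) # cword {x\<in>D. Suc i < x})))
                (wd (cword {x\<in>D. Suc i < x}))))"
    using assms M_eq_T_C_C_Suc_Cs[OF i sorted_above_Suc_subset, of I]
    by (intro M_eq_T_cword_middle) (simp add: cword_def)
  then show ?thesis
    using cword_change_middle[of D] cword_change_middle[of "D - {i, Suc i}"] assms by simp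
qed

lemma lt_I_of_cov:
  assumes "cov n I E D" "E \<noteq> D" "E \<subseteq> D \<union> {i, Suc i}"
  shows "E \<subseteq> {1..n} \<and> lt_I n I E D"
  using assms D i by (auto simp: lt_I_def le_I_def)

lemma M_eq_T_cword_one_lower_term:
  "\<exists>E b. M_eq n I (wd (T i # cword D))
           (padd (psmult (alpha i I D) (wd (cword D))) (psmult b (wd (cword E))))
       \<and> (b \<noteq> 0 \<longrightarrow> E \<subseteq> {1..n} \<and> lt_I n I E D)"
proof -
  have i_cov: "1 \<le> i \<and> i \<le> n - 1" using i by auto
  consider (neither) "i \<notin> D" "Suc i \<notin> D" | (lower) "i \<in> D" "Suc i \<notin> D"
    | (upper) "i \<notin> D" "Suc i \<in> D" | (both) "i \<in> D" "Suc i \<in> D"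
    by blast
  then show ?thesis
  proof cases
    case neither
    have "psmult (S_char I i) (wd (cword D))
            = padd (psmult (alpha i I D) (wd (cword D))) (psmult 0 (wd (cword D)))"
      using neither by (auto simp: alpha_def S_char_def padd_def psmult_def)
    then show ?thesis using M_eq_T_cword_notin_notin[OF neither] by metis
  next
    case lower
    let ?E = "insert (Suc i) (D - {i})"
    have "psmult (S_char I i) (wd (cword ?E))
            = padd (psmult (alpha i I D) (wd (cword D))) (psmult (S_char I i) (wd (cword ?E)))"
      using lower by (auto simp: alpha_def padd_def psmult_def)
    moreover have "S_char I i \<noteq> 0 \<Longrightarrow> cov n I ?E D"
      using lower i_cov unfolding cov_def by (intro exI[of _ i]) (auto simp: S_char_def split: if_splits)
    ultimately show ?thesis
      using M_eq_T_cword_in_notin[OF lower] lt_I_of_cov[of ?E] lower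
      by (intro exI[of _ ?E] exI[of _ "S_char I i"]) auto
  next
    case upper
    let ?E = "insert i (D - {Suc i})"
    have "psub (psmult (S_char I i + 1) (wd (cword ?E))) (wd (cword D))
            = padd (psmult (alpha i I D) (wd (cword D))) (psmult (S_char I i + 1) (wd (cword ?E)))"
      using upper by (auto simp: alpha_def psub_def padd_def psmult_def)
    moreover have "S_char I i + 1 \<noteq> 0 \<Longrightarrow> cov n I ?E D"
      using upper i_cov unfolding cov_def by (intro exI[of _ i]) (auto simp: S_char_def split: if_splits)
    ultimately show ?thesis
      using M_eq_T_cword_notin_in[OF upper] lt_I_of_cov[of ?E] upper
      by (intro exI[of _ ?E] exI[of _ "S_char I i + 1"]) auto
  next
    case both
    let ?E = "D - {i, Suc i}"
    have "padd (psmult (- (S_char I i + 1)) (wd (cword D))) (wd (cword ?E))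
            = padd (psmult (alpha i I D) (wd (cword D))) (psmult 1 (wd (cword ?E)))"
      using both by (auto simp: alpha_def S_char_def padd_def psmult_def)
    moreover have "cov n I ?E D"
      using both i_cov unfolding cov_def by (intro exI[of _ i]) auto
    ultimately show ?thesis
      using M_eq_T_cword_in_in[OF both] lt_I_of_cov[of ?E] both
      by (intro exI[of _ ?E] exI[of _ 1]) auto
  qed
qed

end

theorem mainTheorem7:
  fixes n i :: nat and I :: "nat list" and D :: "nat set"
  assumes "is_composition I n" and "1 \<le> i" and "i \<le> n - 1" and "D \<subseteq> {1..n}"
  shows "\<exists>\<beta> :: nat set \<Rightarrow> complex.
           M_eq n I (lmul (T i) (wd (cword D)))
             (padd (psmult (alpha i I D) (wd (cword D)))
                   (\<lambda>w. \<Sum>D'\<in>{D'. D' \<subseteq> {1..n} \<and> lt_I n I D' D}. \<beta> D' * wd (cword D') w))"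
proof -
  have i: "1 \<le> i" "i < n" using assms(2,3) by auto
  obtain E b where E: "M_eq n I (wd (T i # cword D))
      (padd (psmult (alpha i I D) (wd (cword D))) (psmult b (wd (cword E))))"
    and lower: "b \<noteq> 0 \<longrightarrow> E \<subseteq> {1..n} \<and> lt_I n I E D"
    using M_eq_T_cword_one_lower_term[OF i assms(4)] by blast
  let ?S = "{D'. D' \<subseteq> {1..n} \<and> lt_I n I D' D}"
  have "finite ?S" by (rule finite_subset[of _ "Pow {1..n}"]) auto
  have "(\<Sum>D'\<in>?S. (if D' = E then b else 0) * wd (cword D') w) = b * wd (cword E) w" for w
  proof -
    have "(\<Sum>D'\<in>?S. (if D' = E then b else 0) * wd (cword D') w)
            = (\<Sum>D'\<in>?S. if D' = E then b * wd (cword E) w else 0)"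
      by (rule sum.cong) auto
    also have "\<dots> = b * wd (cword E) w"
      using \<open>finite ?S\<close> lower by (cases "b = 0") simp_all
    finally show ?thesis .
  qed
  then have "(\<lambda>w. \<Sum>D'\<in>?S. (if D' = E then b else 0) * wd (cword D') w)
              = psmult b (wd (cword E))"
    by (simp add: psmult_def)
  then show ?thesis
    using E unfolding lmul_wd by (intro exI[of _ "\<lambda>D'. if D' = E then b else 0"]) simp
qed

end
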